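(* Let $L$ be a semiregular Lagrangian density and let a section $\overline s$ of $J^1Y\to X$ be a solution of the first order Euler–Lagrange equations for $L$. Let $H$ be a multimomentum Hamiltonian form associated with $L$ whose momentum morphism satisfies $\widehat H\circ\widehat L\circ\overline s=\overline s$. Then the section $r=\widehat L\circ\overline s$ of $\Pi\to X$ is a solution of the Hamilton equations for $H$, and it takes its values in the constraint space $Q=\widehat L(J^1Y)$.
   Context: Let $\pi:Y\to X$ be a fibred manifold over an $n$-dimensional manifold $X$, fibred coordinates $(x^\lambda,y^i)$, $\omega=dx^1\wedge\dots\wedge dx^n$, $\omega_\lambda=\partial_\lambda\rfloor\omega$. $J^1Y$ has coordinates $(x^\lambda,y^i,y^i_\lambda)$. A Lagrangian density is $L=\mathcal L(x,y,y_\mu)\omega$, $\partial^\lambda_i=\partial/\partial y^i_\lambda$, $\pi^\lambda_i=\partial^\lambda_i\mathcal L$. The first order Euler–Lagrange equations for a section $(\overline s^i,\overline s^i_\lambda)$ of $J^1Y\to X$ are $\partial_\lambda\overline s^i=\overline s^i_\lambda$, $\partial_i\mathcal L-(\partial_\lambda+\overline s^j_\lambda\partial_j+\partial_\lambda\overline s^j_\mu\partial^\mu_j)\partial^\lambda_i\mathcal L=0$. The Legendre bundle $\Pi=\wedge^nT^*X\otimes_YTX\otimes_YV^*Y\to Y$ has coordinates $(x^\lambda,y^i,p^\lambda_i)$, $\partial^i_\lambda=\partial/\partial p^\lambda_i$; the Legendre morphism is $p^\lambda_i\circ\widehat L=\pi^\lambda_i$, $Q=\widehat L(J^1Y)$;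 $L$ is semiregular if each $\widehat L^{-1}(q)$, $q\in Q$, is a connected submanifold. A multimomentum Hamiltonian form is an $n$-form $H$ on $\Pi$, locally $p^\lambda_idy^i\wedge\omega_\lambda-\mathcal H\omega$, such that locally some jet field $\gamma$ of $\Pi\to X$ satisfies $\gamma\rfloor(dp^\lambda_i\wedge dy^i\wedge\omega\otimes\partial_\lambda)=dH$; its momentum morphism is $y^i_\lambda\circ\widehat H=\partial^i_\lambda\mathcal H$. For a bundle morphism $\Phi:\Pi\to J^1Y$ over $Y$ put $H_\Phi=p^\lambda_idy^i\wedge\omega_\lambda-p^\lambda_i\Phi^i_\lambda\omega$. $H$ is associated with $L$ if $\widehat L\circ\widehat H|_Q=\mathrm{Id}_Q$ and $H=H_{\widehat H}+\mathcal L(x,y,\partial^j_\lambda\mathcal H)\omega$. The Hamilton equations for a section $(r^i,r^\lambda_i)$ of $\Pi\to X$ are $\partial_\lambda r^i=\partial^i_\lambda\mathcal H$, $\partial_\lambda r^\lambda_i=-\partial_i\mathcal H$. *)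

theory Defs
  imports "HOL-Analysis.Analysis"
begin

fun C_k :: "nat \<Rightarrow> 'a::real_normed_vector set \<Rightarrow> ('a \<Rightarrow> 'b::real_normed_vector) \<Rightarrow> bool" where
  "C_k 0 S f = continuous_on S f"
| "C_k (Suc k) S f =
     (f differentiable_on S \<and> (\<forall>v. C_k k S (\<lambda>z. frechet_derivative f (at z) v)))"

definition Cinf_on :: "'a::real_normed_vector set \<Rightarrow> ('a \<Rightarrow> 'b::real_normed_vector) \<Rightarrow> bool" where
  "Cinf_on S f \<longleftrightarrow> (\<forall>k. C_k k S f)"

definition is_submanifold :: "'a::euclidean_space set \<Rightarrow> bool" where
  "is_submanifold S \<longleftrightarrow>
     (\<forall>a\<in>S. \<exists>U V (\<phi>::'a \<Rightarrow> 'a) \<psi> T.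
        open U \<and> a \<in> U \<and> open V \<and> Cinf_on U \<phi> \<and> Cinf_on V \<psi> \<and> \<phi> ` U = V \<and>
        (\<forall>z\<in>U. \<psi> (\<phi> z) = z) \<and> (\<forall>w\<in>V. \<phi> (\<psi> w) = w) \<and>
        subspace T \<and> \<phi> ` (S \<inter> U) = V \<inter> T)"

text \<open>A point of \<open>J\<^sup>1Y\<close> is \<open>(x, y, v)\<close> with \<open>v $ i $ \<lambda> = y^i_\<lambda>\<close>;
  a point of the Legendre bundle \<open>\<Pi>\<close> is \<open>(x, y, p)\<close> with \<open>p $ i $ \<lambda> = p^\<lambda>_i\<close>.
  The fibred manifold is an open set \<open>Y\<close> of \<open>\<real>^n \<times> \<real>^m\<close> with \<open>\<pi> = fst\<close>.\<close>

type_synonym ('n, 'm) pt = "(real^'n) \<times> (real^'m) \<times> (real^'n^'m)"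

definition bundle_over :: "((real^'n::finite) \<times> (real^'m::finite)) set \<Rightarrow> ('n, 'm) pt set" where
  "bundle_over Y = {z. (fst z, fst (snd z)) \<in> Y}"

definition px :: "(('n::finite, 'm::finite) pt \<Rightarrow> real) \<Rightarrow> 'n \<Rightarrow> ('n::finite, 'm::finite) pt \<Rightarrow> real" where
  "px F lam z = frechet_derivative F (at z) (axis lam 1, 0, 0)"

definition py :: "(('n::finite, 'm::finite) pt \<Rightarrow> real) \<Rightarrow> 'm \<Rightarrow> ('n::finite, 'm::finite) pt \<Rightarrow> real" where
  "py F i z = frechet_derivative F (at z) (0, axis i 1, 0)"

text \<open>derivative w.r.t. the fibre coordinate with indices \<open>i, \<lambda>\<close> (\<open>y^i_\<lambda>\<close> resp. \<open>p^\<lambda>_i\<close>)\<close>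
definition pv :: "(('n::finite, 'm::finite) pt \<Rightarrow> real) \<Rightarrow> 'm \<Rightarrow> 'n \<Rightarrow> ('n::finite, 'm::finite) pt \<Rightarrow> real" where
  "pv F i lam z = frechet_derivative F (at z) (0, 0, axis i (axis lam 1))"

definition dX :: "(real^'n \<Rightarrow> real) \<Rightarrow> 'n \<Rightarrow> real^'n \<Rightarrow> real" where
  "dX g lam x = frechet_derivative g (at x) (axis lam 1)"

definition legendre :: "(('n::finite, 'm::finite) pt \<Rightarrow> real) \<Rightarrow> ('n::finite, 'm::finite) pt \<Rightarrow> ('n::finite, 'm::finite) pt" where
  "legendre \<L> z = (fst z, fst (snd z), \<chi> i. \<chi> lam. pv \<L> i lam z)"

definition momentum :: "(('n::finite, 'm::finite) pt \<Rightarrow> real) \<Rightarrow> ('n::finite, 'm::finite) pt \<Rightarrow> ('n::finite, 'm::finite) pt" where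
  "momentum \<H> q = (fst q, fst (snd q), \<chi> i. \<chi> lam. pv \<H> i lam q)"

definition lagrangian :: "((real^'n::finite) \<times> (real^'m::finite)) set \<Rightarrow> (('n::finite, 'm::finite) pt \<Rightarrow> real) \<Rightarrow> bool" where
  "lagrangian Y \<L> \<longleftrightarrow> open Y \<and> Cinf_on (bundle_over Y) \<L>"

definition constraint_space :: "((real^'n::finite) \<times> (real^'m::finite)) set \<Rightarrow> (('n::finite, 'm::finite) pt \<Rightarrow> real) \<Rightarrow> ('n, 'm) pt set" where
  "constraint_space Y \<L> = legendre \<L> ` bundle_over Y"

definition semiregular :: "((real^'n::finite) \<times> (real^'m::finite)) set \<Rightarrow> (('n::finite, 'm::finite) pt \<Rightarrow> real) \<Rightarrow> bool" where
  "semiregular Y \<L> \<longleftrightarrow>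
     (\<forall>q\<in>constraint_space Y \<L>.
        connected (bundle_over Y \<inter> legendre \<L> -` {q}) \<and>
        is_submanifold (bundle_over Y \<inter> legendre \<L> -` {q}))"

text \<open>Multimomentum Hamiltonian form \<open>H = p^\<lambda>_i dy^i\<and>\<omega>_\<lambda> - \<H>\<omega>\<close>, given by \<open>\<H>\<close>.
  The condition \<open>\<gamma>\<rfloor>(dp^\<lambda>_i\<and>dy^i\<and>\<omega>\<otimes>\<partial>_\<lambda>) = dH\<close> for a jet field
  \<open>\<gamma> = dx^\<lambda>\<otimes>(\<partial>_\<lambda> + \<gamma>^i_\<lambda>\<partial>_i + \<gamma>^\<mu>_{i\<lambda>}\<partial>^i_\<mu>)\<close>, written in coordinates, reads
  \<open>\<gamma>^i_\<lambda> = \<partial>^i_\<lambda>\<H>\<close> and \<open>\<gamma>^\<lambda>_{i\<lambda>} = -\<partial>_i\<H>\<close>.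
  Here \<open>fst (\<gamma> z) $ i $ \<lambda> = \<gamma>^i_\<lambda>\<close> and \<open>snd (\<gamma> z) $ i $ \<mu> $ \<lambda> = \<gamma>^\<mu>_{i\<lambda>}\<close>.\<close>
definition mm_hamiltonian :: "((real^'n::finite) \<times> (real^'m::finite)) set \<Rightarrow> (('n::finite, 'm::finite) pt \<Rightarrow> real) \<Rightarrow> bool" where
  "mm_hamiltonian Y \<H> \<longleftrightarrow> Cinf_on (bundle_over Y) \<H> \<and>
     (\<forall>q\<in>bundle_over Y. \<exists>W (\<gamma> :: ('n::finite, 'm::finite) pt \<Rightarrow> (real^'n^'m) \<times> (real^'n^'n^'m)).
        open W \<and> q \<in> W \<and> W \<subseteq> bundle_over Y \<and> Cinf_on W \<gamma> \<and>
        (\<forall>z\<in>W. (\<forall>i lam. fst (\<gamma> z) $ i $ lam = pv \<H> i lam z) \<and>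
                (\<forall>i. (\<Sum>lam\<in>UNIV. snd (\<gamma> z) $ i $ lam $ lam) = - py \<H> i z)))"

text \<open>\<open>H\<close> associated with \<open>L\<close>: \<open>L\<^sup>\<and>\<circ>H\<^sup>\<and>|_Q = Id_Q\<close> and
  \<open>H = H_{H\<^sup>\<and>} + \<L>(x,y,\<partial>\<H>)\<omega>\<close>, i.e. \<open>\<H> = p^\<lambda>_i \<partial>^i_\<lambda>\<H> - \<L>(x,y,\<partial>\<H>)\<close> on \<open>\<Pi>\<close>.\<close>
definition associated :: "((real^'n::finite) \<times> (real^'m::finite)) set \<Rightarrow> (('n::finite, 'm::finite) pt \<Rightarrow> real) \<Rightarrow> (('n::finite, 'm::finite) pt \<Rightarrow> real) \<Rightarrow> bool" where
  "associated Y \<H> \<L> \<longleftrightarrow>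
     (\<forall>q\<in>constraint_space Y \<L>. legendre \<L> (momentum \<H> q) = q) \<and>
     (\<forall>q\<in>bundle_over Y. \<H> q =
        (\<Sum>i\<in>UNIV. \<Sum>lam\<in>UNIV. snd (snd q) $ i $ lam * pv \<H> i lam q) - \<L> (momentum \<H> q))"

text \<open>Section \<open>x \<mapsto> (x, sy x, sv x)\<close> of \<open>J\<^sup>1Y \<rightarrow> X\<close> over an open \<open>D \<subseteq> X\<close>
  solving the first order Euler--Lagrange equations.\<close>
definition EL_solution ::
  "((real^'n::finite) \<times> (real^'m::finite)) set \<Rightarrow> (('n::finite, 'm::finite) pt \<Rightarrow> real) \<Rightarrow> (real^'n) set \<Rightarrow>
   (real^'n \<Rightarrow> real^'m) \<Rightarrow> (real^'n \<Rightarrow> real^'n^'m) \<Rightarrow> bool" where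
  "EL_solution Y \<L> D sy sv \<longleftrightarrow>
     open D \<and> (\<forall>x\<in>D. (x, sy x) \<in> Y) \<and> Cinf_on D sy \<and> Cinf_on D sv \<and>
     (\<forall>x\<in>D. \<forall>i lam. dX (\<lambda>x. sy x $ i) lam x = sv x $ i $ lam) \<and>
     (\<forall>x\<in>D. \<forall>i. let z = (x, sy x, sv x) in
        py \<L> i z
        - (\<Sum>lam\<in>UNIV. px (pv \<L> i lam) lam z
            + (\<Sum>j\<in>UNIV. sv x $ j $ lam * py (pv \<L> i lam) j z)
            + (\<Sum>j\<in>UNIV. \<Sum>mu\<in>UNIV. dX (\<lambda>x. sv x $ j $ mu) lam x * pv (pv \<L> i lam) j mu z))
        = 0)"

text \<open>Section \<open>x \<mapsto> (x, ry x, rp x)\<close> of \<open>\<Pi> \<rightarrow> X\<close> over \<open>D\<close> solving the Hamilton equations.\<close>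
definition hamilton_solution ::
  "((real^'n::finite) \<times> (real^'m::finite)) set \<Rightarrow> (('n::finite, 'm::finite) pt \<Rightarrow> real) \<Rightarrow> (real^'n) set \<Rightarrow>
   (real^'n \<Rightarrow> real^'m) \<Rightarrow> (real^'n \<Rightarrow> real^'n^'m) \<Rightarrow> bool" where
  "hamilton_solution Y \<H> D ry rp \<longleftrightarrow>
     (\<forall>x\<in>D. (x, ry x) \<in> Y) \<and> ry differentiable_on D \<and> rp differentiable_on D \<and>
     (\<forall>x\<in>D. \<forall>i lam. dX (\<lambda>x. ry x $ i) lam x = pv \<H> i lam (x, ry x, rp x)) \<and>
     (\<forall>x\<in>D. \<forall>i. (\<Sum>lam\<in>UNIV. dX (\<lambda>x. rp x $ i $ lam) lam x) = - py \<H> i (x, ry x, rp x))"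

end

theory Submission
  imports Defs
begin

text \<open>
  The section \<open>r = L\<^sup>^ \<circ> s\<close> has components \<open>r\<^sup>i = s\<^sup>i\<close> and \<open>r\<^sup>\<lambda>\<^sub>i = \<pi>\<^sup>\<lambda>\<^sub>i \<circ> s\<close>.
  The first Hamilton equation holds because \<open>\<partial>\<^sub>\<lambda>s\<^sup>i = s\<^sup>i\<^sub>\<lambda>\<close> and \<open>H\<^sup>^(r) = s\<close> says
  \<open>\<partial>\<^sup>i\<^sub>\<lambda>\<H>(r) = s\<^sup>i\<^sub>\<lambda>\<close>. For the second, differentiate the identity
  \<open>\<H> = p\<^sup>\<lambda>\<^sub>i \<partial>\<^sup>i\<^sub>\<lambda>\<H> - \<L> \<circ> H\<^sup>^\<close> in \<open>y\<^sup>i\<close> at a point \<open>q\<close> with \<open>L\<^sup>^(H\<^sup>^(q)) = q\<close>: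
  there \<open>p = \<pi>(H\<^sup>^(q))\<close>, so all terms with second derivatives of \<open>\<H>\<close> cancel and
  \<open>\<partial>\<^sub>i\<H>(q) = -\<partial>\<^sub>i\<L>(H\<^sup>^(q))\<close>. At \<open>q = r(x)\<close> this is \<open>-\<partial>\<^sub>i\<L>(s(x))\<close>, which by the
  Euler--Lagrange equations is \<open>-\<partial>\<^sub>\<lambda>r\<^sup>\<lambda>\<^sub>i\<close>.
\<close>

lemma Cinf_on_imp_differentiable_on:
  assumes "Cinf_on S f"
  shows "f differentiable_on S"
  using assms C_k.simps(2)[of 0 S f] unfolding Cinf_on_def by blast

lemma Cinf_on_imp_differentiable_at:
  "Cinf_on S f \<Longrightarrow> open S \<Longrightarrow> z \<in> S \<Longrightarrow> f differentiable at z"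
  using Cinf_on_imp_differentiable_on differentiable_on_eq_differentiable_at by blast

lemma Cinf_on_frechet_derivative:
  assumes "Cinf_on S f"
  shows "Cinf_on S (\<lambda>z. frechet_derivative f (at z) v)"
  using assms C_k.simps(2) unfolding Cinf_on_def by blast

lemma Cinf_on_pv: "Cinf_on S F \<Longrightarrow> Cinf_on S (pv F i lam)"
  unfolding pv_def[abs_def] by (rule Cinf_on_frechet_derivative)

lemma open_bundle_over:
  assumes "open Y"
  shows "open (bundle_over Y)"
proof -
  have "bundle_over Y = (\<lambda>z. (fst z, fst (snd z))) -` Y"
    unfolding bundle_over_def by auto
  then show ?thesis
    by (simp add: open_vimage assms continuous_intros)
qed

lemma matrix_basis_expansion:
  "(c::real^'n::finite^'m::finite) = (\<Sum>j\<in>UNIV. \<Sum>mu\<in>UNIV. c$j$mu *\<^sub>R axis j (axis mu 1))"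
proof -
  have "(\<Sum>j\<in>UNIV. \<Sum>mu\<in>UNIV. c$j$mu *\<^sub>R axis j (axis mu 1)) $ k $ l = c $ k $ l" for k l
  proof -
    have "(\<Sum>j\<in>UNIV. \<Sum>mu\<in>UNIV. c$j$mu *\<^sub>R axis j (axis mu 1)) $ k $ l
        = (\<Sum>j\<in>UNIV. \<Sum>mu\<in>UNIV. if k = j then if l = mu then c$j$mu else 0 else 0)"
      by (simp add: sum_component axis_def if_distrib[of "\<lambda>v. v $ l"] if_distrib[of "\<lambda>v. _ * v"]
          cong: if_cong)
    also have "\<dots> = c $ k $ l"
      by (subst sum.swap) (simp add: sum.delta)
    finally show ?thesis .
  qed
  then show ?thesis by (simp add: vec_eq_iff)
qed

lemma has_derivative_matrix_lambda:
  fixes g :: "'m::finite \<Rightarrow> 'n::finite \<Rightarrow> 'a::real_normed_vector \<Rightarrow> real"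
  assumes "\<And>j mu. (g j mu has_derivative g' j mu) F"
  shows "((\<lambda>w. \<chi> j mu. g j mu w) has_derivative (\<lambda>h. \<chi> j mu. g' j mu h)) F"
  by (subst (1 2) matrix_basis_expansion) (simp, intro has_derivative_sum has_derivative_scaleR_left assms)

lemma frechet_derivative_pt_expansion:
  fixes F :: "('n::finite, 'm::finite) pt \<Rightarrow> real"
  assumes "F differentiable at z"
  shows "frechet_derivative F (at z) (a, b, c) =
     (\<Sum>lam\<in>UNIV. a$lam * px F lam z) + (\<Sum>j\<in>UNIV. b$j * py F j z)
     + (\<Sum>j\<in>UNIV. \<Sum>mu\<in>UNIV. c$j$mu * pv F j mu z)"
proof -
  have abc: "(a, b, c) = (\<Sum>lam\<in>UNIV. a$lam *\<^sub>R (axis lam 1, 0, 0)) + (\<Sum>j\<in>UNIV. b$j *\<^sub>R (0, axis j 1, 0))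
     + (\<Sum>j\<in>UNIV. \<Sum>mu\<in>UNIV. c$j$mu *\<^sub>R (0, 0, axis j (axis mu 1)))"
    using basis_expansion[of a] basis_expansion[of b] matrix_basis_expansion[of c]
    by (simp add: prod_eq_iff fst_sum snd_sum scalar_mult_eq_scaleR)
  have lin: "linear (frechet_derivative F (at z))"
    using assms by (rule linear_frechet_derivative)
  show ?thesis
    unfolding px_def py_def pv_def
    by (subst abc) (simp only: linear_add[OF lin] linear_sum[OF lin] linear_scale[OF lin] real_scaleR_def)
qed

lemma frechet_derivative_vec_nth:
  fixes f :: "'a::real_normed_vector \<Rightarrow> 'b::real_normed_vector^'k::finite"
  assumes "f differentiable at x"
  shows "(\<lambda>x. f x $ j) differentiable at x"
    and "frechet_derivative (\<lambda>x. f x $ j) (at x) h = frechet_derivative f (at x) h $ j"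
proof -
  have D: "((\<lambda>x. f x $ j) has_derivative (\<lambda>h. frechet_derivative f (at x) h $ j)) (at x)"
    using assms frechet_derivative_works
    by (blast intro: bounded_linear.has_derivative[OF bounded_linear_vec_nth])
  then show "(\<lambda>x. f x $ j) differentiable at x"
    by (rule differentiableI)
  show "frechet_derivative (\<lambda>x. f x $ j) (at x) h = frechet_derivative f (at x) h $ j"
    by (simp add: frechet_derivative_at[OF D, symmetric])
qed

lemma dX_along_section:
  fixes F :: "('n::finite, 'm::finite) pt \<Rightarrow> real"
  assumes sy: "sy differentiable at x" and sv: "sv differentiable at x"
    and F: "F differentiable at (x, sy x, sv x)"
  shows "dX (\<lambda>x. F (x, sy x, sv x)) lam x = px F lam (x, sy x, sv x)
     + (\<Sum>j\<in>UNIV. dX (\<lambda>x. sy x $ j) lam x * py F j (x, sy x, sv x))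
     + (\<Sum>j\<in>UNIV. \<Sum>mu\<in>UNIV. dX (\<lambda>x. sv x $ j $ mu) lam x * pv F j mu (x, sy x, sv x))"
proof -
  let ?e = "axis lam 1 :: real^'n"
  have Z: "((\<lambda>x. (x, sy x, sv x)) has_derivative
      (\<lambda>h. (h, frechet_derivative sy (at x) h, frechet_derivative sv (at x) h))) (at x)"
    using sy sv frechet_derivative_works[of sy "at x"] frechet_derivative_works[of sv "at x"]
    by (intro has_derivative_Pair has_derivative_ident) auto
  have "dX (\<lambda>x. F (x, sy x, sv x)) lam x
      = frechet_derivative F (at (x, sy x, sv x))
          (?e, frechet_derivative sy (at x) ?e, frechet_derivative sv (at x) ?e)"
    using frechet_derivative_compose[OF differentiableI[OF Z] F]
    by (simp add: dX_def o_def frechet_derivative_at[OF Z, symmetric])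
  also have "\<dots> = px F lam (x, sy x, sv x)
     + (\<Sum>j\<in>UNIV. frechet_derivative sy (at x) ?e $ j * py F j (x, sy x, sv x))
     + (\<Sum>j\<in>UNIV. \<Sum>mu\<in>UNIV. frechet_derivative sv (at x) ?e $ j $ mu * pv F j mu (x, sy x, sv x))"
    using F by (simp add: frechet_derivative_pt_expansion axis_def if_distrib[of "\<lambda>v. v * _"] sum.delta
        cong: if_cong)
  finally show ?thesis
    using sy sv by (simp add: dX_def frechet_derivative_vec_nth)
qed

lemma has_derivative_momentum:
  assumes "\<And>j mu. pv H j mu differentiable at q"
  shows "(momentum H has_derivative
      (\<lambda>h. (fst h, fst (snd h), \<chi> j mu. frechet_derivative (pv H j mu) (at q) h))) (at q)"
proof -
  have "momentum H = (\<lambda>w. (fst w, fst (snd w), \<chi> j mu. pv H j mu w))"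
    by (simp add: momentum_def fun_eq_iff)
  then show ?thesis
    using assms frechet_derivative_works
    by (auto intro!: has_derivative_Pair has_derivative_matrix_lambda has_derivative_fst
        has_derivative_snd has_derivative_ident)
qed

lemma associated_py_hamiltonian:
  fixes H L :: "('n::finite, 'm::finite) pt \<Rightarrow> real"
  assumes "associated Y H L" and "lagrangian Y L" and "Cinf_on (bundle_over Y) H"
    and q: "q \<in> bundle_over Y" and fixed: "legendre L (momentum H q) = q"
  shows "py H i q = - py L i (momentum H q)"
proof -
  let ?B = "bundle_over Y" and ?M = "momentum H q" and ?e = "(0, axis i 1, 0) :: ('n, 'm) pt"
  have B: "open ?B"
    using \<open>lagrangian Y L\<close> by (simp add: lagrangian_def open_bundle_over)
  have M_in: "?M \<in> ?B"
    using q by (simp add: bundle_over_def momentum_def)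
  have p: "snd (snd q) $ j $ mu = pv L j mu ?M" for j mu
    using arg_cong[OF fixed, of "\<lambda>z. snd (snd z) $ j $ mu"] by (simp add: legendre_def)
  have dH: "pv H j mu differentiable at q" for j mu
    using Cinf_on_imp_differentiable_at[OF Cinf_on_pv[OF \<open>Cinf_on ?B H\<close>] B q] .
  define G' where "G' j mu = frechet_derivative (pv H j mu) (at q)" for j mu
  define M' where "M' h = (fst h, fst (snd h), \<chi> j mu. G' j mu h)" for h :: "('n, 'm) pt"
  define R' where "R' h = (\<Sum>j\<in>UNIV. \<Sum>mu\<in>UNIV.
      snd (snd q) $ j $ mu * G' j mu h + snd (snd h) $ j $ mu * pv H j mu q)
    - frechet_derivative L (at ?M) (M' h)" for h
  have dG: "(pv H j mu has_derivative G' j mu) (at q)" for j mu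
    unfolding G'_def using dH frechet_derivative_works by blast
  have dp: "((\<lambda>w. snd (snd w) $ j $ mu) has_derivative (\<lambda>h. snd (snd h) $ j $ mu)) (at q)" for j mu
    by (intro bounded_linear.has_derivative[OF bounded_linear_vec_nth] has_derivative_snd has_derivative_ident)
  have dM: "(momentum H has_derivative M') (at q)"
    unfolding M'_def G'_def by (rule has_derivative_momentum[OF dH])
  have dL: "(L has_derivative frechet_derivative L (at ?M)) (at ?M)"
    using \<open>lagrangian Y L\<close> Cinf_on_imp_differentiable_at[OF _ B M_in]
    unfolding lagrangian_def frechet_derivative_works[symmetric] by blast
  have "((\<lambda>w. (\<Sum>j\<in>UNIV. \<Sum>mu\<in>UNIV. snd (snd w) $ j $ mu * pv H j mu w) - L (momentum H w))
      has_derivative R') (at q)"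
    unfolding R'_def
    by (intro has_derivative_diff has_derivative_sum has_derivative_mult dp dG has_derivative_compose[OF dM dL])
  then have dR: "(H has_derivative R') (at q)"
    using \<open>associated Y H L\<close> B q
    by (auto simp: associated_def intro: has_derivative_transform_within_open)
  have "py H i q = R' ?e"
    unfolding py_def frechet_derivative_at[OF dR, symmetric] ..
  also have "\<dots> = (\<Sum>j\<in>UNIV. \<Sum>mu\<in>UNIV. pv L j mu ?M * G' j mu ?e)
      - frechet_derivative L (at ?M) (0, axis i 1, \<chi> j mu. G' j mu ?e)"
    by (simp add: R'_def M'_def p)
  also have "frechet_derivative L (at ?M) (0, axis i 1, \<chi> j mu. G' j mu ?e)
      = py L i ?M + (\<Sum>j\<in>UNIV. \<Sum>mu\<in>UNIV. G' j mu ?e * pv L j mu ?M)"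
    using differentiableI[OF dL]
    by (simp add: frechet_derivative_pt_expansion axis_def if_distrib[of "\<lambda>v. v * _"] sum.delta
        cong: if_cong)
  \<comment> \<open>The two double sums over second derivatives of \<open>H\<close> cancel.\<close>
  finally show ?thesis
    by (simp add: mult.commute)
qed

lemma EL_solution_differentiable_at:
  assumes "lagrangian Y L" and EL: "EL_solution Y L D sy sv" and x: "x \<in> D"
  shows "sy differentiable at x" and "sv differentiable at x"
    and "pv L i lam differentiable at (x, sy x, sv x)"
proof -
  show "sy differentiable at x" and "sv differentiable at x"
    using EL x by (auto simp: EL_solution_def intro: Cinf_on_imp_differentiable_at)
  have "(x, sy x, sv x) \<in> bundle_over Y"
    using EL x by (simp add: EL_solution_def bundle_over_def)
  then show "pv L i lam differentiable at (x, sy x, sv x)"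
    using \<open>lagrangian Y L\<close>
    by (auto simp: lagrangian_def open_bundle_over intro: Cinf_on_imp_differentiable_at Cinf_on_pv)
qed

lemma EL_solution_divergence_momentum:
  assumes "lagrangian Y L" and EL: "EL_solution Y L D sy sv" and x: "x \<in> D"
  shows "(\<Sum>lam\<in>UNIV. dX (\<lambda>x. pv L i lam (x, sy x, sv x)) lam x) = py L i (x, sy x, sv x)"
proof -
  have jet: "dX (\<lambda>x. sy x $ j) lam x = sv x $ j $ lam" for j lam
    using EL x by (simp add: EL_solution_def)
  show ?thesis
    using EL x
    by (simp add: EL_solution_def Let_def jet dX_along_section[OF EL_solution_differentiable_at[OF assms]])
qed

lemma differentiable_on_legendre_along_section:
  assumes "lagrangian Y L" and EL: "EL_solution Y L D sy sv"
  shows "(\<lambda>x. snd (snd (legendre L (x, sy x, sv x)))) differentiable_on D"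
proof -
  have "(\<lambda>x. pv L i lam (x, sy x, sv x)) differentiable at x" if x: "x \<in> D" for x i lam
  proof -
    have "(\<lambda>x. (x, sy x, sv x)) differentiable at x"
      using EL_solution_differentiable_at[OF assms x]
      by (intro differentiable_Pair differentiable_ident)
    from differentiable_chain_at[OF this EL_solution_differentiable_at(3)[OF assms x]]
    show ?thesis
      by (simp add: o_def)
  qed
  then have "(\<lambda>x. \<chi> i lam. pv L i lam (x, sy x, sv x)) differentiable at x" if "x \<in> D" for x
    using that frechet_derivative_works
    by (intro differentiableI[OF has_derivative_matrix_lambda]) blast
  moreover have "open D"
    using EL by (simp add: EL_solution_def)
  ultimately show ?thesis
    by (simp add: legendre_def differentiable_on_eq_differentiable_at)
qed

theorem proposition16p11:
  fixes Y :: "((real^'n) \<times> (real^'m)) set"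
    and \<L> \<H> :: "('n, 'm) pt \<Rightarrow> real"
    and D :: "(real^'n) set"
    and sy :: "real^'n \<Rightarrow> real^'m" and sv :: "real^'n \<Rightarrow> real^'n^'m"
  assumes "lagrangian Y \<L>"
    and "semiregular Y \<L>"
    and "EL_solution Y \<L> D sy sv"
    and "mm_hamiltonian Y \<H>"
    and "associated Y \<H> \<L>"
    and "\<forall>x\<in>D. momentum \<H> (legendre \<L> (x, sy x, sv x)) = (x, sy x, sv x)"
  shows "hamilton_solution Y \<H> D
           (\<lambda>x. fst (snd (legendre \<L> (x, sy x, sv x))))
           (\<lambda>x. snd (snd (legendre \<L> (x, sy x, sv x))))
       \<and> (\<forall>x\<in>D. legendre \<L> (x, sy x, sv x) \<in> constraint_space Y \<L>)"
proof -
  define p where "p x = (\<chi> i lam. pv \<L> i lam (x, sy x, sv x))" for x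
  have leg: "legendre \<L> (x, sy x, sv x) = (x, sy x, p x)" for x
    by (simp add: p_def legendre_def)
  have p_nth: "p x $ i $ lam = pv \<L> i lam (x, sy x, sv x)" for x i lam
    by (simp add: p_def)
  have s_in: "(x, sy x, sv x) \<in> bundle_over Y" and r_in: "(x, sy x, p x) \<in> bundle_over Y"
    if "x \<in> D" for x
    using assms(3) that by (simp_all add: EL_solution_def bundle_over_def)
  have mom: "momentum \<H> (x, sy x, p x) = (x, sy x, sv x)" if "x \<in> D" for x
    using assms(6) that by (simp add: leg)
  have pvH: "pv \<H> i lam (x, sy x, p x) = sv x $ i $ lam" if "x \<in> D" for x i lam
    using arg_cong[OF mom[OF that], of "\<lambda>z. snd (snd z) $ i $ lam"] by (simp add: momentum_def)
  have pyH: "py \<H> i (x, sy x, p x) = - py \<L> i (x, sy x, sv x)" if "x \<in> D" for x i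
    using associated_py_hamiltonian[OF assms(5,1) _ r_in[OF that]] assms(4) mom[OF that]
    by (simp add: mm_hamiltonian_def leg)
  have "hamilton_solution Y \<H> D sy p"
    using assms(3) differentiable_on_legendre_along_section[OF assms(1,3)]
      EL_solution_divergence_momentum[OF assms(1,3)]
    by (auto simp: hamilton_solution_def EL_solution_def leg p_nth pvH pyH
        intro: Cinf_on_imp_differentiable_on)
  moreover have "legendre \<L> (x, sy x, sv x) \<in> constraint_space Y \<L>" if "x \<in> D" for x
    using s_in[OF that] by (simp add: constraint_space_def)
  ultimately show ?thesis
    by (simp add: leg)
qed

end
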